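(* Let $A\colon X\to Y$ be a compact linear operator between separable Hilbert spaces with infinite-dimensional range, where $X=L^2(\mathcal{M})$, with singular value decomposition $Ax=\sum_{n=1}^\infty\sigma_n\langle x,v_n\rangle_X u_n$. Let $\eta>0$ and suppose that $$\sum_{n=1}^\infty\sigma_n^\eta\|v_n\|_{L^\infty(\mathcal{M})}^2<\infty.$$ Let $(c_n)_{n\in\mathbb{N}}$ be real numbers with $c_n\ge c_0>0$ for all $n$ and $c_n\le C\sigma_n^{-\beta}$ for all $n\in\mathbb{N}$, for some $C,\beta>0$. For $\alpha>0$ let $T^c_\alpha y=\sum_{n=1}^\infty\frac{\sigma_n}{\sigma_n^2+\alpha c_n}\langle y,u_n\rangle_Y v_n$. Let $y\in V_{2\eta+2\beta}$. Then there exists a constant $C'>0$ such that $$\|A^\dagger y-T^c_\alpha y\|_{L^\infty(\mathcal{M})}\le C'\alpha^{\min\{1,\eta/4\}}\qquad\text{for all }\alpha>0.$$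
   Context: $\mathcal{M}$ is a measure space. The SVD consists of orthonormal systems $(u_n)$ in $Y$ and $(v_n)$ in $X$ and a non-increasing sequence $(\sigma_n)$ of positive reals with $\sigma_n\to0$. The pseudoinverse is $A^\dagger y=\sum_{n}\sigma_n^{-1}\langle y,u_n\rangle_Y v_n$. For $\gamma\ge0$, $V_\gamma=\{y\in Y:\sum_{n=1}^\infty|\langle y,u_n\rangle_Y|^2\sigma_n^{-(2+\gamma)}<\infty\}$. *)

theory Defs
  imports "HOL-Probability.Probability"
begin

definition L2_mem :: "'a measure \<Rightarrow> ('a \<Rightarrow> real) \<Rightarrow> bool" where
  "L2_mem M f \<longleftrightarrow> f \<in> borel_measurable M \<and> integrable M (\<lambda>x. (f x)\<^sup>2)"

definition L2_inner :: "'a measure \<Rightarrow> ('a \<Rightarrow> real) \<Rightarrow> ('a \<Rightarrow> real) \<Rightarrow> real" where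
  "L2_inner M f g = (\<integral>x. f x * g x \<partial>M)"

definition L2_limit :: "'a measure \<Rightarrow> (nat \<Rightarrow> 'a \<Rightarrow> real) \<Rightarrow> ('a \<Rightarrow> real) \<Rightarrow> bool" where
  "L2_limit M s f \<longleftrightarrow> L2_mem M f \<and>
     ((\<lambda>N. \<integral>x. (f x - s N x)\<^sup>2 \<partial>M) \<longlonglongrightarrow> 0)"

definition Linf_norm :: "'a measure \<Rightarrow> ('a \<Rightarrow> real) \<Rightarrow> ereal" where
  "Linf_norm M f = esssup M (\<lambda>x. ereal \<bar>f x\<bar>)"

definition V_set :: "(nat \<Rightarrow> 'b::real_inner) \<Rightarrow> (nat \<Rightarrow> real) \<Rightarrow> real \<Rightarrow> 'b set" where
  "V_set u \<sigma> \<gamma> = {y. summable (\<lambda>n. (inner y (u n))\<^sup>2 * \<sigma> n powr (-(2 + \<gamma>)))}"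

definition pinv_partial :: "(nat \<Rightarrow> 'b::real_inner) \<Rightarrow> (nat \<Rightarrow> 'a \<Rightarrow> real) \<Rightarrow> (nat \<Rightarrow> real)
    \<Rightarrow> 'b \<Rightarrow> nat \<Rightarrow> 'a \<Rightarrow> real" where
  "pinv_partial u v \<sigma> y N = (\<lambda>x. \<Sum>n<N. (1 / \<sigma> n) * inner y (u n) * v n x)"

definition T_partial :: "(nat \<Rightarrow> 'b::real_inner) \<Rightarrow> (nat \<Rightarrow> 'a \<Rightarrow> real) \<Rightarrow> (nat \<Rightarrow> real)
    \<Rightarrow> (nat \<Rightarrow> real) \<Rightarrow> real \<Rightarrow> 'b \<Rightarrow> nat \<Rightarrow> 'a \<Rightarrow> real" where
  "T_partial u v \<sigma> c \<alpha> y N =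
     (\<lambda>x. \<Sum>n<N. (\<sigma> n / ((\<sigma> n)\<^sup>2 + \<alpha> * c n)) * inner y (u n) * v n x)"

end

theory Submission
  imports Defs
begin

(* In the basis (v n) the difference of the partial sums has coefficients \<rho>_n <y, u_n>, where
   \<rho>_n = 1/\<sigma>_n - \<sigma>_n/(\<sigma>_n^2 + \<alpha> c_n) = r_n/\<sigma>_n and r_n = \<alpha> c_n/(\<sigma>_n^2 + \<alpha> c_n) lies in (0,1].
   For t = min 1 (\<eta>/4) we get r_n \<le> r_n^t \<le> (\<alpha> C \<sigma>_n^(-2-\<beta>))^t; the conditions t \<le> 1 and
   4t \<le> \<eta> are what lets a weighted AM-GM inequality bound |\<rho>_n <y, u_n>| ||v_n||_\<infinity> by \<alpha>^t
   times a term of \<sigma>_n^\<eta> ||v_n||_\<infinity>^2 plus a term of the source-condition series of y.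
   The sum of these bounds dominates every partial sum almost everywhere, and such a bound
   passes to L^2 limits: |d_N| \<le> B a.e. gives \<integral> (max 0 (|h| - B))^2 \<le> \<integral> (h - d_N)^2 \<longrightarrow> 0. *)

lemma square_add_le: "(a + b)\<^sup>2 \<le> 2 * a\<^sup>2 + 2 * (b::real)\<^sup>2"
  using sum_squares_bound[of a b] by (simp add: power2_sum)

lemma L2_mem_add: "L2_mem M f \<Longrightarrow> L2_mem M g \<Longrightarrow> L2_mem M (\<lambda>x. f x + g x)"
proof -
  assume "L2_mem M f" "L2_mem M g"
  then have [measurable]: "f \<in> borel_measurable M" "g \<in> borel_measurable M"
    and bound_integrable: "integrable M (\<lambda>x. 2 * (f x)\<^sup>2 + 2 * (g x)\<^sup>2)"
    by (auto simp: L2_mem_def)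
  have "integrable M (\<lambda>x. (f x + g x)\<^sup>2)"
    by (rule Bochner_Integration.integrable_bound[OF bound_integrable])
       (measurable, simp add: square_add_le)
  then show ?thesis
    by (simp add: L2_mem_def)
qed

lemma L2_mem_cmult: "L2_mem M f \<Longrightarrow> L2_mem M (\<lambda>x. c * f x)"
  unfolding L2_mem_def by (auto simp: power_mult_distrib)

lemma L2_mem_diff: "L2_mem M f \<Longrightarrow> L2_mem M g \<Longrightarrow> L2_mem M (\<lambda>x. f x - g x)"
  using L2_mem_add[of M f "\<lambda>x. (-1) * g x"] L2_mem_cmult[of M g "-1"] by simp

lemma L2_mem_sum: "(\<And>n. n \<in> S \<Longrightarrow> L2_mem M (h n)) \<Longrightarrow> L2_mem M (\<lambda>x. \<Sum>n\<in>S. h n x)"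
proof (induction S rule: infinite_finite_induct)
  case (insert n S)
  then show ?case by (simp add: L2_mem_add)
qed (simp_all add: L2_mem_def)

lemma L2_limit_diff:
  assumes "L2_limit M s f" "L2_limit M t g" "\<And>N. L2_mem M (s N)" "\<And>N. L2_mem M (t N)"
  shows "L2_limit M (\<lambda>N x. s N x - t N x) (\<lambda>x. f x - g x)"
proof -
  have f: "L2_mem M f" and g: "L2_mem M g"
    and lim_f: "(\<lambda>N. \<integral>x. (f x - s N x)\<^sup>2 \<partial>M) \<longlonglongrightarrow> 0"
    and lim_g: "(\<lambda>N. \<integral>x. (g x - t N x)\<^sup>2 \<partial>M) \<longlonglongrightarrow> 0"
    using assms(1,2) by (auto simp: L2_limit_def)
  have sq_integrable: "integrable M (\<lambda>x. (p x - q x)\<^sup>2)" if "L2_mem M p" "L2_mem M q" for p q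
    using L2_mem_diff[OF that] by (simp add: L2_mem_def)
  have integrable_f: "integrable M (\<lambda>x. (f x - s N x)\<^sup>2)"
    and integrable_g: "integrable M (\<lambda>x. (g x - t N x)\<^sup>2)" for N
    using sq_integrable f g assms(3,4) by blast+
  have bound: "(\<integral>x. ((f x - g x) - (s N x - t N x))\<^sup>2 \<partial>M)
      \<le> 2 * (\<integral>x. (f x - s N x)\<^sup>2 \<partial>M) + 2 * (\<integral>x. (g x - t N x)\<^sup>2 \<partial>M)" for N
  proof -
    have "(\<integral>x. ((f x - g x) - (s N x - t N x))\<^sup>2 \<partial>M)
        \<le> (\<integral>x. 2 * (f x - s N x)\<^sup>2 + 2 * (g x - t N x)\<^sup>2 \<partial>M)"
    proof (rule integral_mono)
      show "integrable M (\<lambda>x. 2 * (f x - s N x)\<^sup>2 + 2 * (g x - t N x)\<^sup>2)"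
        using integrable_f integrable_g by simp
      show "((f x - g x) - (s N x - t N x))\<^sup>2 \<le> 2 * (f x - s N x)\<^sup>2 + 2 * (g x - t N x)\<^sup>2" for x
        using square_add_le[of "f x - s N x" "t N x - g x"] by (simp add: power2_commute algebra_simps)
    qed (intro sq_integrable L2_mem_diff f g assms(3,4))
    also have "\<dots> = 2 * (\<integral>x. (f x - s N x)\<^sup>2 \<partial>M) + 2 * (\<integral>x. (g x - t N x)\<^sup>2 \<partial>M)"
      using integrable_f integrable_g by simp
    finally show ?thesis .
  qed
  have bound_lim: "(\<lambda>N. 2 * (\<integral>x. (f x - s N x)\<^sup>2 \<partial>M) + 2 * (\<integral>x. (g x - t N x)\<^sup>2 \<partial>M))
      \<longlonglongrightarrow> 0"
    by (intro tendsto_add_zero tendsto_mult_right_zero lim_f lim_g)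
  have "(\<lambda>N. \<integral>x. ((f x - g x) - (s N x - t N x))\<^sup>2 \<partial>M) \<longlonglongrightarrow> 0"
    by (rule tendsto_sandwich[OF _ _ tendsto_const bound_lim])
       (simp_all add: always_eventually bound Bochner_Integration.integral_nonneg)
  then show ?thesis
    using L2_mem_diff[OF f g] by (simp add: L2_limit_def)
qed

lemma L2_limit_AE_abs_le:
  assumes lim: "L2_limit M d h" and d: "\<And>N. L2_mem M (d N)"
    and bound: "\<And>N. AE x in M. \<bar>d N x\<bar> \<le> B"
  shows "AE x in M. \<bar>h x\<bar> \<le> B"
proof -
  have h: "L2_mem M h" and dist_lim: "(\<lambda>N. \<integral>x. (h x - d N x)\<^sup>2 \<partial>M) \<longlonglongrightarrow> 0"
    using lim by (auto simp: L2_limit_def)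
  have [measurable]: "h \<in> borel_measurable M" "d N \<in> borel_measurable M" for N
    using h d by (auto simp: L2_mem_def)
  define e where "e x = max 0 (\<bar>h x\<bar> - B)" for x
  have e_le: "AE x in M. (e x)\<^sup>2 \<le> (h x - d N x)\<^sup>2" for N
    using bound[of N]
  proof eventually_elim
    case (elim x)
    then have "e x \<le> \<bar>h x - d N x\<bar>" "0 \<le> e x" unfolding e_def by auto
    then have "(e x)\<^sup>2 \<le> \<bar>h x - d N x\<bar>\<^sup>2" by (rule power_mono)
    then show ?case by simp
  qed
  have dist_integrable: "integrable M (\<lambda>x. (h x - d N x)\<^sup>2)" for N
    using L2_mem_diff[OF h d] by (simp add: L2_mem_def)
  have [measurable]: "e \<in> borel_measurable M"
    unfolding e_def by measurable
  have e_integrable: "integrable M (\<lambda>x. (e x)\<^sup>2)"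
    using e_le[of 0] by (intro Bochner_Integration.integrable_bound[OF dist_integrable[of 0]]) auto
  have "(\<integral>x. (e x)\<^sup>2 \<partial>M) \<le> (\<integral>x. (h x - d N x)\<^sup>2 \<partial>M)" for N
    by (rule integral_mono_AE[OF e_integrable dist_integrable e_le])
  then have "(\<integral>x. (e x)\<^sup>2 \<partial>M) \<le> 0"
    by (intro LIMSEQ_le_const[OF dist_lim]) auto
  then have "AE x in M. (e x)\<^sup>2 = 0"
    using integral_nonneg_eq_0_iff_AE[OF e_integrable] by (simp add: antisym integral_nonneg_AE)
  then show ?thesis
    by eventually_elim (auto simp: e_def max_def split: if_splits)
qed

lemma AE_abs_le_Linf_norm:
  assumes "Linf_norm M f < \<infinity>"
  shows "AE x in M. \<bar>f x\<bar> \<le> real_of_ereal (Linf_norm M f)"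
proof -
  have "AE x in M. ereal \<bar>f x\<bar> \<le> Linf_norm M f"
    unfolding Linf_norm_def by (rule esssup_AE)
  then show ?thesis
    by eventually_elim (use assms in \<open>cases "Linf_norm M f"; simp\<close>)
qed

lemma Linf_norm_le:
  assumes "f \<in> borel_measurable M" "AE x in M. \<bar>f x\<bar> \<le> B"
  shows "Linf_norm M f \<le> ereal B"
  unfolding Linf_norm_def using assms by (intro esssup_I) auto

lemma Linf_norm_L2_limit_series_le:
  fixes a L :: "nat \<Rightarrow> real"
  assumes lim: "L2_limit M (\<lambda>N x. \<Sum>n<N. a n * v n x) h"
    and v: "\<And>n. L2_mem M (v n)" and v_bound: "\<And>n. AE x in M. \<bar>v n x\<bar> \<le> L n"
    and L_nonneg: "\<And>n. L n \<ge> 0" and summable: "summable (\<lambda>n. \<bar>a n\<bar> * L n)"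
  shows "Linf_norm M h \<le> ereal (\<Sum>n. \<bar>a n\<bar> * L n)"
proof (rule Linf_norm_le)
  show "h \<in> borel_measurable M"
    using lim by (simp add: L2_limit_def L2_mem_def)
  have "AE x in M. \<forall>n. \<bar>v n x\<bar> \<le> L n"
    using v_bound by (simp add: AE_all_countable)
  then have "AE x in M. \<bar>\<Sum>n<N. a n * v n x\<bar> \<le> (\<Sum>n. \<bar>a n\<bar> * L n)" for N
  proof eventually_elim
    case (elim x)
    have "\<bar>\<Sum>n<N. a n * v n x\<bar> \<le> (\<Sum>n<N. \<bar>a n * v n x\<bar>)"
      by (rule sum_abs)
    also have "\<dots> \<le> (\<Sum>n<N. \<bar>a n\<bar> * L n)"
      using elim by (intro sum_mono) (simp add: abs_mult mult_left_mono)
    also have "\<dots> \<le> (\<Sum>n. \<bar>a n\<bar> * L n)"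
      using L_nonneg by (intro sum_le_suminf[OF summable]) auto
    finally show ?case .
  qed
  then show "AE x in M. \<bar>h x\<bar> \<le> (\<Sum>n. \<bar>a n\<bar> * L n)"
    by (rule L2_limit_AE_abs_le[OF lim L2_mem_sum[OF L2_mem_cmult[OF v]]])
qed

lemma tikhonov_residual_le:
  fixes s \<alpha> c C \<beta> t :: real
  assumes s: "0 < s" and \<alpha>: "0 < \<alpha>" and c: "0 < c" "c \<le> C * s powr (-\<beta>)"
    and t: "0 \<le> t" "t \<le> 1"
  shows "\<bar>1 / s - s / (s\<^sup>2 + \<alpha> * c)\<bar> \<le> \<alpha> powr t * C powr t * s powr (-1 - (2 + \<beta>) * t)"
proof -
  define r where "r = \<alpha> * c / (s\<^sup>2 + \<alpha> * c)"
  have den: "0 < s\<^sup>2 + \<alpha> * c"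
    using s \<alpha> c by (simp add: add_pos_pos)
  have C: "0 < C"
    using c s by (smt (verit) powr_gt_zero zero_less_mult_pos2)
  have residual: "1 / s - s / (s\<^sup>2 + \<alpha> * c) = r / s"
    unfolding r_def using s den by (simp add: field_simps power2_eq_square)
  have r: "0 < r" "r \<le> 1"
    unfolding r_def using \<alpha> c den by (auto simp: field_simps)
  have "r \<le> r powr t"
    using powr_mono'[of t 1 r] r t by simp
  also have "\<dots> \<le> (\<alpha> * c / s\<^sup>2) powr t"
    unfolding r_def using \<alpha> c s t den by (intro powr_mono2 divide_left_mono) (auto simp: zero_less_mult_iff)
  also have "\<dots> \<le> (\<alpha> * C * s powr (-\<beta> - 2)) powr t"
  proof (rule powr_mono2)
    have "\<alpha> * c / s\<^sup>2 \<le> \<alpha> * (C * s powr (-\<beta>)) / s\<^sup>2"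
      using \<alpha> c by (intro divide_right_mono mult_left_mono) auto
    also have "\<dots> = \<alpha> * C * s powr (-\<beta> - 2)"
      using s by (simp add: powr_diff)
    finally show "\<alpha> * c / s\<^sup>2 \<le> \<alpha> * C * s powr (-\<beta> - 2)" .
  qed (use \<alpha> c s t in auto)
  also have "\<dots> = \<alpha> powr t * C powr t * s powr ((-\<beta> - 2) * t)"
    using \<alpha> C by (simp add: powr_mult powr_powr)
  finally have "r / s \<le> \<alpha> powr t * C powr t * (s powr ((-\<beta> - 2) * t) / s)"
    using s by (simp add: divide_right_mono)
  also have "s powr ((-\<beta> - 2) * t) / s = s powr ((-\<beta> - 2) * t - 1)"
    using s by (simp add: powr_diff)
  also have "(-\<beta> - 2) * t - 1 = -1 - (2 + \<beta>) * t"
    by (simp add: algebra_simps)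
  finally show ?thesis
    using r s by (simp add: residual)
qed

lemma tikhonov_residual_sq_weighted_le:
  fixes s s0 \<alpha> c C \<beta> \<eta> t :: real
  assumes s: "0 < s" "s \<le> s0" and \<alpha>: "0 < \<alpha>" and c: "0 < c" "c \<le> C * s powr (-\<beta>)"
    and \<beta>: "0 \<le> \<beta>" and t: "0 \<le> t" "t \<le> 1" "4 * t \<le> \<eta>"
  shows "(1 / s - s / (s\<^sup>2 + \<alpha> * c))\<^sup>2 / s powr \<eta>
    \<le> (\<alpha> powr t)\<^sup>2 * (C powr (2 * t) * s0 powr (\<eta> + 2 * \<beta> - (4 + 2 * \<beta>) * t))
        * s powr (-(2 + (2 * \<eta> + 2 * \<beta>)))"
proof -
  define e where "e = \<eta> + 2 * \<beta> - (4 + 2 * \<beta>) * t"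
  have "\<beta> * t \<le> \<beta>"
    using mult_left_mono[OF t(2) \<beta>] by simp
  then have e: "0 \<le> e"
    unfolding e_def using t by (simp add: algebra_simps)
  have "(1 / s - s / (s\<^sup>2 + \<alpha> * c))\<^sup>2 \<le> (\<alpha> powr t * C powr t * s powr (-1 - (2 + \<beta>) * t))\<^sup>2"
    using power_mono[OF tikhonov_residual_le[OF s(1) \<alpha> c t(1,2)] abs_ge_zero, of 2] by simp
  also have "\<dots> = (\<alpha> powr t)\<^sup>2 * C powr (2 * t) * s powr (-2 - (4 + 2 * \<beta>) * t)"
    by (simp add: power_mult_distrib power2_eq_square powr_add[symmetric] algebra_simps)
  finally have "(1 / s - s / (s\<^sup>2 + \<alpha> * c))\<^sup>2 / s powr \<eta>
      \<le> (\<alpha> powr t)\<^sup>2 * C powr (2 * t) * (s powr (-2 - (4 + 2 * \<beta>) * t) / s powr \<eta>)"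
    by (simp add: divide_right_mono)
  also have "s powr (-2 - (4 + 2 * \<beta>) * t) / s powr \<eta> = s powr e * s powr (-(2 + (2 * \<eta> + 2 * \<beta>)))"
    unfolding e_def powr_diff[symmetric] powr_add[symmetric]
    by (rule arg_cong[where f = "(powr) s"]) (simp add: algebra_simps)
  also have "(\<alpha> powr t)\<^sup>2 * C powr (2 * t) * (s powr e * s powr (-(2 + (2 * \<eta> + 2 * \<beta>))))
      \<le> (\<alpha> powr t)\<^sup>2 * C powr (2 * t) * (s0 powr e * s powr (-(2 + (2 * \<eta> + 2 * \<beta>))))"
    using s e by (intro mult_left_mono mult_right_mono powr_mono2) auto
  finally show ?thesis
    unfolding e_def by (simp add: mult_ac)
qed

lemma mult_le_weighted_sum_squares:
  fixes a b w :: real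
  assumes "0 < w"
  shows "a * b \<le> (w * b\<^sup>2 + a\<^sup>2 / w) / 2"
proof -
  have "0 \<le> (w * b - a)\<^sup>2"
    by simp
  then have "2 * w * (a * b) \<le> w * (w * b\<^sup>2) + a\<^sup>2"
    by (simp add: power2_eq_square algebra_simps)
  then show ?thesis
    using assms by (simp add: field_simps)
qed

lemma tikhonov_coeff_term_le:
  fixes s s0 \<alpha> c C \<beta> \<eta> t b l :: real
  assumes s: "0 < s" "s \<le> s0" and \<alpha>: "0 < \<alpha>" and c: "0 < c" "c \<le> C * s powr (-\<beta>)"
    and \<beta>: "0 \<le> \<beta>" and t: "0 \<le> t" "t \<le> 1" "4 * t \<le> \<eta>"
  defines "D \<equiv> C powr (2 * t) * s0 powr (\<eta> + 2 * \<beta> - (4 + 2 * \<beta>) * t)"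
  shows "\<bar>(1 / s - s / (s\<^sup>2 + \<alpha> * c)) * b\<bar> * l
    \<le> \<alpha> powr t * ((s powr \<eta> * l\<^sup>2 + D * (b\<^sup>2 * s powr (-(2 + (2 * \<eta> + 2 * \<beta>))))) / 2)"
proof -
  define \<rho> where "\<rho> = 1 / s - s / (s\<^sup>2 + \<alpha> * c)"
  define K where "K = b\<^sup>2 * s powr (-(2 + (2 * \<eta> + 2 * \<beta>)))"
  define w where "w = \<alpha> powr t * s powr \<eta>"
  have w: "0 < w"
    unfolding w_def using \<alpha> s by simp
  have "\<rho>\<^sup>2 / s powr \<eta> * b\<^sup>2 \<le> (\<alpha> powr t)\<^sup>2 * D * s powr (-(2 + (2 * \<eta> + 2 * \<beta>))) * b\<^sup>2"
    unfolding \<rho>_def D_def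
    by (intro mult_right_mono tikhonov_residual_sq_weighted_le[OF s \<alpha> c \<beta> t]) simp
  then have "(\<rho> * b)\<^sup>2 / w \<le> \<alpha> powr t * D * K"
    unfolding w_def K_def using \<alpha> s by (simp add: power2_eq_square field_simps)
  then have "\<bar>\<rho> * b\<bar> * l \<le> (w * l\<^sup>2 + \<alpha> powr t * D * K) / 2"
    using mult_le_weighted_sum_squares[OF w, of "\<bar>\<rho> * b\<bar>" l] by simp
  then show ?thesis
    unfolding \<rho>_def K_def w_def by (simp add: algebra_simps)
qed

lemma L2_limit_pinv_minus_T_partial:
  assumes v: "\<And>n. L2_mem M (v n)"
    and f: "L2_limit M (pinv_partial u v \<sigma> y) f" and g: "L2_limit M (T_partial u v \<sigma> c \<alpha> y) g"
  shows "L2_limit M (\<lambda>N x. \<Sum>n<N. ((1 / \<sigma> n - \<sigma> n / ((\<sigma> n)\<^sup>2 + \<alpha> * c n)) * inner y (u n)) * v n x)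
    (\<lambda>x. f x - g x)"
proof -
  have "L2_limit M (\<lambda>N x. pinv_partial u v \<sigma> y N x - T_partial u v \<sigma> c \<alpha> y N x) (\<lambda>x. f x - g x)"
    by (rule L2_limit_diff[OF f g])
       (unfold pinv_partial_def T_partial_def; intro L2_mem_sum L2_mem_cmult v)+
  then show ?thesis
    by (simp add: pinv_partial_def T_partial_def sum_subtractf[symmetric] algebra_simps)
qed

lemma Linf_norm_pinv_minus_T_partial_le:
  fixes \<sigma> c L :: "nat \<Rightarrow> real" and s0 \<alpha> C \<beta> \<eta> t :: real
  assumes v: "\<And>n. L2_mem M (v n)" and v_bound: "\<And>n. AE x in M. \<bar>v n x\<bar> \<le> L n"
    and L_nonneg: "\<And>n. 0 \<le> L n"
    and \<sigma>: "\<And>n. 0 < \<sigma> n" "\<And>n. \<sigma> n \<le> s0" and \<alpha>: "0 < \<alpha>"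
    and c: "\<And>n. 0 < c n" "\<And>n. c n \<le> C * \<sigma> n powr (-\<beta>)"
    and \<beta>: "0 \<le> \<beta>" and t: "0 \<le> t" "t \<le> 1" "4 * t \<le> \<eta>"
    and W: "summable (\<lambda>n. \<sigma> n powr \<eta> * (L n)\<^sup>2)"
    and K: "summable (\<lambda>n. (inner y (u n))\<^sup>2 * \<sigma> n powr (-(2 + (2 * \<eta> + 2 * \<beta>))))"
    and f: "L2_limit M (pinv_partial u v \<sigma> y) f" and g: "L2_limit M (T_partial u v \<sigma> c \<alpha> y) g"
  defines "D \<equiv> C powr (2 * t) * s0 powr (\<eta> + 2 * \<beta> - (4 + 2 * \<beta>) * t)"
  shows "Linf_norm M (\<lambda>x. f x - g x) \<le> ereal (\<alpha> powr t * (((\<Sum>n. \<sigma> n powr \<eta> * (L n)\<^sup>2)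
    + D * (\<Sum>n. (inner y (u n))\<^sup>2 * \<sigma> n powr (-(2 + (2 * \<eta> + 2 * \<beta>))))) / 2))"
proof -
  define a where "a n = (1 / \<sigma> n - \<sigma> n / ((\<sigma> n)\<^sup>2 + \<alpha> * c n)) * inner y (u n)" for n
  define m where "m n = \<alpha> powr t * ((\<sigma> n powr \<eta> * (L n)\<^sup>2
    + D * ((inner y (u n))\<^sup>2 * \<sigma> n powr (-(2 + (2 * \<eta> + 2 * \<beta>))))) / 2)" for n
  have coeff_bound: "\<bar>a n\<bar> * L n \<le> m n" for n
    unfolding a_def m_def D_def by (rule tikhonov_coeff_term_le[OF \<sigma>(1,2) \<alpha> c \<beta> t])
  have m_sums: "m sums (\<alpha> powr t * (((\<Sum>n. \<sigma> n powr \<eta> * (L n)\<^sup>2)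
      + D * (\<Sum>n. (inner y (u n))\<^sup>2 * \<sigma> n powr (-(2 + (2 * \<eta> + 2 * \<beta>))))) / 2))"
    unfolding m_def by (intro sums_mult sums_divide sums_add summable_sums W K)
  have summable: "summable (\<lambda>n. \<bar>a n\<bar> * L n)"
    by (rule summable_comparison_test'[OF sums_summable[OF m_sums]])
       (use coeff_bound L_nonneg in \<open>simp add: abs_mult\<close>)
  have "Linf_norm M (\<lambda>x. f x - g x) \<le> ereal (\<Sum>n. \<bar>a n\<bar> * L n)"
    by (rule Linf_norm_L2_limit_series_le[OF L2_limit_pinv_minus_T_partial[OF v f g, folded a_def]
        v v_bound L_nonneg summable])
  also have "(\<Sum>n. \<bar>a n\<bar> * L n) \<le> suminf m"
    by (intro suminf_le coeff_bound summable sums_summable[OF m_sums])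
  finally show ?thesis
    by (simp add: sums_unique[OF m_sums, symmetric])
qed

theorem theorem4p12:
  fixes M :: "'a measure"
    and A :: "('a \<Rightarrow> real) \<Rightarrow> 'b::{real_inner, complete_space}"
    and u :: "nat \<Rightarrow> 'b" and v :: "nat \<Rightarrow> 'a \<Rightarrow> real" and \<sigma> :: "nat \<Rightarrow> real"
    and \<eta> \<beta> C c0 :: real and c :: "nat \<Rightarrow> real" and y :: 'b
  assumes u_orth: "\<And>n m. inner (u n) (u m) = (if n = m then 1 else 0)"
    and v_L2: "\<And>n. L2_mem M (v n)"
    and v_orth: "\<And>n m. L2_inner M (v n) (v m) = (if n = m then 1 else 0)"
    and \<sigma>_pos: "\<And>n. \<sigma> n > 0"
    and \<sigma>_dec: "decseq \<sigma>"
    and \<sigma>_lim: "\<sigma> \<longlonglongrightarrow> 0"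
    and A_svd: "\<And>f. L2_mem M f \<Longrightarrow>
                 (\<lambda>N. \<Sum>n<N. (\<sigma> n * L2_inner M f (v n)) *\<^sub>R u n) \<longlonglongrightarrow> A f"
    and \<eta>_pos: "\<eta> > 0"
    and v_Linf_fin: "\<And>n. Linf_norm M (v n) < \<infinity>"
    and v_sum: "summable (\<lambda>n. \<sigma> n powr \<eta> * (real_of_ereal (Linf_norm M (v n)))\<^sup>2)"
    and c0_pos: "c0 > 0" and c_lower: "\<And>n. c n \<ge> c0"
    and C_pos: "C > 0" and \<beta>_pos: "\<beta> > 0"
    and c_upper: "\<And>n. c n \<le> C * \<sigma> n powr (-\<beta>)"
    and y_V: "y \<in> V_set u \<sigma> (2 * \<eta> + 2 * \<beta>)"
  shows "\<exists>C'>0. \<forall>\<alpha>>0. \<forall>f g.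
           L2_limit M (pinv_partial u v \<sigma> y) f \<longrightarrow>
           L2_limit M (T_partial u v \<sigma> c \<alpha> y) g \<longrightarrow>
           Linf_norm M (\<lambda>x. f x - g x) \<le> ereal (C' * \<alpha> powr (min 1 (\<eta> / 4)))"
proof -
  define t where "t = min 1 (\<eta> / 4)"
  define L where "L n = \<bar>real_of_ereal (Linf_norm M (v n))\<bar>" for n
  define B where "B = ((\<Sum>n. \<sigma> n powr \<eta> * (L n)\<^sup>2)
    + C powr (2 * t) * \<sigma> 0 powr (\<eta> + 2 * \<beta> - (4 + 2 * \<beta>) * t)
      * (\<Sum>n. (inner y (u n))\<^sup>2 * \<sigma> n powr (-(2 + (2 * \<eta> + 2 * \<beta>))))) / 2"
  have t: "0 \<le> t" "t \<le> 1" "4 * t \<le> \<eta>"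
    using \<eta>_pos by (auto simp: t_def)
  have L_nonneg: "0 \<le> L n" for n
    unfolding L_def by (rule abs_ge_zero)
  have v_bound: "AE x in M. \<bar>v n x\<bar> \<le> L n" for n
    using AE_abs_le_Linf_norm[OF v_Linf_fin[of n]] unfolding L_def
    by eventually_elim (meson abs_ge_self order_trans)
  have W: "summable (\<lambda>n. \<sigma> n powr \<eta> * (L n)\<^sup>2)"
    using v_sum unfolding L_def power2_abs .
  have K: "summable (\<lambda>n. (inner y (u n))\<^sup>2 * \<sigma> n powr (-(2 + (2 * \<eta> + 2 * \<beta>))))"
    using y_V by (simp add: V_set_def)
  have "0 \<le> B"
    unfolding B_def using W K by (intro divide_nonneg_pos add_nonneg_nonneg mult_nonneg_nonneg suminf_nonneg) auto
  have \<sigma>_le: "\<sigma> n \<le> \<sigma> 0" for n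
    using \<sigma>_dec by (simp add: decseq_def)
  have c_pos: "0 < c n" for n
    using c_lower[of n] c0_pos by linarith
  show ?thesis
  proof (intro exI[of _ "B + 1"] conjI allI impI)
    fix \<alpha> :: real and f g
    assume "\<alpha> > 0" "L2_limit M (pinv_partial u v \<sigma> y) f" "L2_limit M (T_partial u v \<sigma> c \<alpha> y) g"
    then have "Linf_norm M (\<lambda>x. f x - g x) \<le> ereal (\<alpha> powr t * B)"
      unfolding B_def using \<beta>_pos
      by (intro Linf_norm_pinv_minus_T_partial_le[OF v_L2 v_bound L_nonneg \<sigma>_pos \<sigma>_le _ c_pos c_upper _ t W K]) auto
    also have "\<alpha> powr t * B \<le> (B + 1) * \<alpha> powr t"
      by (simp add: algebra_simps)
    finally show "Linf_norm M (\<lambda>x. f x - g x) \<le> ereal ((B + 1) * \<alpha> powr (min 1 (\<eta> / 4)))"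
      by (simp add: t_def)
  qed (use \<open>0 \<le> B\<close> in simp)
qed

end
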